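(* Let $m\ge1$, $n_1=\cdots=n_m=2$, $I=(1,\ldots,1)$, $J=(2,\ldots,2)$ and $c\in\mathbb{C}\setminus\{0\}$. Then $\operatorname{hrank}(\mathcal{E}^{IJ}(c))=2m$, and a Hermitian rank decomposition is $$\mathcal{E}^{IJ}(c)=\frac{1}{2m}\Big([\tilde u_0,u_0,\ldots,u_0]_{\otimes h}+(-1)^m[\tilde u_m,u_m,\ldots,u_m]_{\otimes h}+\sum_{k=1}^{m-1}(-1)^k\big([\tilde u_k,u_k,\ldots,u_k]_{\otimes h}+[\tilde v_k,\overline{u_k},\ldots,\overline{u_k}]_{\otimes h}\big)\Big),$$ where $u_k=(1,e^{k\pi\sqrt{-1}/m})$, $\tilde u_k=(c,e^{k\pi\sqrt{-1}/m})$, $\tilde v_k=(c,e^{-k\pi\sqrt{-1}/m})$ for $k=0,\ldots,m$.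
   Context: $\mathbb{C}^{[2,\ldots,2]}$ ($m$ copies) is the real vector space of tensors $\mathcal{H}\in\mathbb{C}^{2\times\cdots\times2}$ of order $2m$ with $\mathcal{H}_{i_1\ldots i_m j_1\ldots j_m}=\overline{\mathcal{H}_{j_1\ldots j_m i_1\ldots i_m}}$. For $v_i\in\mathbb{C}^2$, $[v_1,\ldots,v_m]_{\otimes h}:=v_1\otimes\cdots\otimes v_m\otimes\overline{v_1}\otimes\cdots\otimes\overline{v_m}$. $\operatorname{hrank}(\mathcal{H})$ is the smallest $r$ such that $\mathcal{H}=\sum_{i=1}^r\lambda_i[u_i^1,\ldots,u_i^m]_{\otimes h}$ with $\lambda_i\in\mathbb{R}$, $u_i^j\in\mathbb{C}^2$. $\mathcal{E}^{IJ}(c)$ is the Hermitian tensor whose entry at $(I,J)=(1,\ldots,1,2,\ldots,2)$ is $c$, whose entry at $(J,I)$ is $\overline{c}$, and all other entries are zero. *)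

theory Defs
  imports "HOL-Analysis.Analysis"
begin

text \<open>A tensor of order 2m with all dimensions 2 is a function from index lists
  (over the two-element type 2) to complex; only lists of length 2m carry
  entries, all other values are zero.\<close>

type_synonym tensor = "2 list \<Rightarrow> complex"

definition vec2 :: "complex \<Rightarrow> complex \<Rightarrow> complex^2" where
  "vec2 a b = (\<chi> i. if i = 1 then a else b)"

definition cvec :: "complex^2 \<Rightarrow> complex^2" where
  "cvec v = (\<chi> i. cnj (v $ i))"

definition hprod :: "(complex^2) list \<Rightarrow> tensor" where
  "hprod vs = (\<lambda>is. if length is = 2 * length vs
      then (\<Prod>k<length vs. (vs ! k) $ (is ! k))
         * (\<Prod>k<length vs. cnj ((vs ! k) $ (is ! (length vs + k))))
      else 0)"

definition hrank :: "nat \<Rightarrow> tensor \<Rightarrow> nat" where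
  "hrank m H = (LEAST r. \<exists>(lam::nat \<Rightarrow> real) (us :: nat \<Rightarrow> (complex^2) list).
      (\<forall>i<r. length (us i) = m) \<and>
      H = (\<lambda>is. \<Sum>i<r. complex_of_real (lam i) * hprod (us i) is))"

definition EIJ :: "nat \<Rightarrow> complex \<Rightarrow> tensor" where
  "EIJ m c = (\<lambda>is. if is = replicate m 1 @ replicate m 2 then c
      else if is = replicate m 2 @ replicate m 1 then cnj c else 0)"

end

theory Submission
  imports Defs
begin

text \<open>
  Let \<open>\<omega> = cis (\<pi> / m)\<close>, a primitive \<open>2m\<close>-th root of unity. At an index
  \<open>xs @ ys\<close>, the Hermitian product of \<open>[(c, z), (1, z), ..., (1, z)]\<close> is a constant
  depending only on the first letters of \<open>xs\<close> and \<open>ys\<close>, times \<open>z^p * cnj z^q\<close>, where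
  \<open>p\<close> and \<open>q\<close> count the letters 2 in \<open>xs\<close> and \<open>ys\<close>. For \<open>z = \<omega>^i\<close> the sign
  \<open>(-1)^i\<close> is \<open>\<omega>^(i m)\<close>, so the alternating sum over \<open>i < 2m\<close> is a character sum of
  \<open>\<omega>^(m + p - q)\<close>: it vanishes unless \<open>2m\<close> divides \<open>m + p - q\<close>, i.e. unless
  \<open>xs @ ys\<close> is \<open>I @ J\<close> or \<open>J @ I\<close>.

  For the lower bound, contract the first index of both halves against a Hermitian matrix
  \<open>M = [[a, b], [cnj b, d]]\<close> with \<open>b \<noteq> 0\<close>. This maps \<open>[v, w, ...]\<^sub>\<otimes>\<^sub>h\<close> to
  \<open>(v\<^sup>* M v) [w, ...]\<^sub>\<otimes>\<^sub>h\<close>, and \<open>E\<^sup>I\<^sup>J(c)\<close> of order \<open>2 (m + 1)\<close> to \<open>E\<^sup>I\<^sup>J(b c)\<close>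
  of order \<open>2 m\<close>. Choosing \<open>M\<close> so that its form vanishes on the leading vectors of two
  terms removes both, so every step down in \<open>m\<close> costs at least two terms. In the base case a
  single term cannot have a zero \<open>(I, I)\<close>-entry and a nonzero \<open>(I, J)\<close>-entry.
\<close>

lemma vec2_nth: "vec2 a b $ i = (if i = 1 then a else b)"
  by (simp add: vec2_def)

lemma cvec_vec2: "cvec (vec2 a b) = vec2 (cnj a) (cnj b)"
  by (simp add: cvec_def vec2_def vec_eq_iff)

lemma neq_1_iff_2: "(x::2) \<noteq> 1 \<longleftrightarrow> x = 2"
  using exhaust_2[of x] by auto

lemma count_list_2_eq_0_iff:
  "count_list xs (2::2) = 0 \<longleftrightarrow> xs = replicate (length xs) 1"
  by (metis count_list_0_iff in_set_replicate replicate_length_same neq_1_iff_2)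

lemma count_list_2_eq_length_iff:
  "count_list xs (2::2) = length xs \<longleftrightarrow> xs = replicate (length xs) 2"
  by (induction xs) (auto, metis count_le_length Suc_n_not_le_n)

definition tprod :: "(complex^2) list \<Rightarrow> 2 list \<Rightarrow> complex" where
  "tprod vs xs = (\<Prod>k<length vs. vs ! k $ xs ! k)"

lemma tprod_Nil [simp]: "tprod [] xs = 1"
  by (simp add: tprod_def)

lemma tprod_Cons [simp]: "tprod (v # vs) (x # xs) = v $ x * tprod vs xs"
  unfolding tprod_def length_Cons prod.lessThan_Suc_shift by simp

lemma tprod_replicate_vec2:
  "tprod (replicate (length xs) (vec2 1 z)) xs = z ^ count_list xs 2"
  by (induction xs) (auto simp: vec2_nth neq_1_iff_2)

lemma hprod_append:
  assumes "length xs = length vs" and "length ys = length vs"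
  shows "hprod vs (xs @ ys) = tprod vs xs * cnj (tprod vs ys)"
  using assms by (simp add: hprod_def tprod_def nth_append)

lemma hprod_Cons:
  assumes "length xs = length vs" and "length ys = length vs"
  shows "hprod (v # vs) (x # xs @ y # ys) = v $ x * cnj (v $ y) * hprod vs (xs @ ys)"
  using assms hprod_append[of "x # xs" "v # vs" "y # ys"] hprod_append[of xs vs ys] by simp

lemma length_eq_double_splitE:
  assumes "length is = 2 * m"
  obtains xs ys where "is = xs @ ys" and "length xs = m" and "length ys = m"
  using assms by (intro that[of "take m is" "drop m is"]) auto

lemma EIJ_append:
  assumes "length xs = m" and "length ys = m"
  shows "EIJ m c (xs @ ys) =
    (if xs = replicate m 1 \<and> ys = replicate m 2 then c
     else if xs = replicate m 2 \<and> ys = replicate m 1 then cnj c else 0)"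
  using assms by (simp add: EIJ_def)

lemma cis_2pi_div_pow_eq_1_iff:
  fixes n k :: nat
  assumes "0 < n"
  shows "cis (2 * pi / n) ^ k = 1 \<longleftrightarrow> n dvd k"
proof -
  have "cis (2 * pi / n) ^ k = cis (2 * pi * k / n)"
    by (simp add: Complex.DeMoivre mult_ac)
  also have "\<dots> = 1 \<longleftrightarrow> cos (2 * pi * k / n) = 1"
    by (auto simp: complex_eq_iff cos_one_sin_zero)
  also have "\<dots> \<longleftrightarrow> (\<exists>j::int. real k = of_int j * real n)"
    using assms by (auto simp: cos_one_2pi_int field_simps)
  also have "\<dots> \<longleftrightarrow> n dvd k"
    by (smt (verit) dvd_def mult.commute of_int_eq_iff of_int_mult of_int_of_nat_eq
        of_nat_dvd_iff)
  finally show ?thesis .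
qed

lemma sum_cis_2pi_div_pow:
  fixes n k :: nat
  assumes "0 < n"
  shows "(\<Sum>i<n. cis (2 * pi / n) ^ (k * i)) = (if n dvd k then of_nat n else 0)"
proof -
  define w where "w = cis (2 * pi / n) ^ k"
  have "w ^ n = 1"
    using assms by (simp add: w_def cis_2pi_div_pow_eq_1_iff flip: power_mult)
  have "(\<Sum>i<n. cis (2 * pi / n) ^ (k * i)) = (\<Sum>i<n. w ^ i)"
    by (simp add: w_def power_mult)
  also have "\<dots> = (if w = 1 then of_nat n else 0)"
    using \<open>w ^ n = 1\<close> by (simp add: sum_gp_strict)
  finally show ?thesis
    using assms by (simp add: w_def cis_2pi_div_pow_eq_1_iff)
qed

lemma norm_eq_1_pow_cnj_pow:
  fixes z :: complex
  assumes "norm z = 1" and "k \<le> n"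
  shows "z ^ n * cnj z ^ k = z ^ (n - k)"
proof -
  have "z * cnj z = 1"
    using complex_norm_square[of z] assms(1) by simp
  then have "z ^ k * cnj z ^ k = 1"
    by (simp flip: power_mult_distrib)
  moreover have "z ^ n = z ^ (n - k) * z ^ k"
    using assms(2) by (simp flip: power_add)
  ultimately show ?thesis
    by (metis mult.assoc mult_1_right)
qed

definition hfactors :: "complex \<Rightarrow> nat \<Rightarrow> complex \<Rightarrow> (complex^2) list" where
  "hfactors c m z = vec2 c z # replicate (m - 1) (vec2 1 z)"

lemma length_hfactors: "1 \<le> m \<Longrightarrow> length (hfactors c m z) = m"
  by (simp add: hfactors_def)

lemma tprod_hfactors:
  assumes "length xs = m" and "1 \<le> m"
  shows "tprod (hfactors c m z) xs = (if hd xs = 1 then c else 1) * z ^ count_list xs 2"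
proof (cases xs)
  case (Cons x xs')
  then have "m - 1 = length xs'"
    using assms(1) by simp
  then show ?thesis
    using Cons by (auto simp: hfactors_def vec2_nth neq_1_iff_2 tprod_replicate_vec2)
qed (use assms in simp)

lemma alternating_sum_hprod_hfactors:
  assumes "1 \<le> m" and "length xs = m" and "length ys = m"
  shows "(\<Sum>i<2 * m. (-1) ^ i * hprod (hfactors c m (cis (pi / m) ^ i)) (xs @ ys))
    = of_nat (2 * m) * EIJ m c (xs @ ys)"
proof -
  define K where "K = (if hd xs = 1 then c else 1) * cnj (if hd ys = 1 then c else 1)"
  define na where "na = count_list xs 2"
  define nb where "nb = count_list ys 2"
  have "na \<le> m" and "nb \<le> m"
    using assms count_le_length[of xs 2] count_le_length[of ys 2]
    by (simp_all add: na_def nb_def)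
  have summand: "(-1) ^ i * hprod (hfactors c m (cis (pi / m) ^ i)) (xs @ ys)
      = K * cis (2 * pi / (2 * m)) ^ ((m + na - nb) * i)" for i
  proof -
    define z where "z = cis (pi / m) ^ i"
    have "cis (pi / m) ^ m = -1"
      using assms(1) by (simp add: Complex.DeMoivre)
    then have "(-1) ^ i = z ^ m"
      by (metis z_def power_mult mult.commute)
    moreover have "hprod (hfactors c m z) (xs @ ys) = K * z ^ na * cnj z ^ nb"
      using assms
      by (simp add: hprod_append length_hfactors tprod_hfactors K_def na_def nb_def)
    moreover have "z ^ (m + na) * cnj z ^ nb = z ^ (m + na - nb)"
      using \<open>nb \<le> m\<close> by (intro norm_eq_1_pow_cnj_pow) (auto simp: z_def norm_power)
    ultimately show ?thesis
      by (simp add: z_def power_add algebra_simps flip: power_mult)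
  qed
  have "(\<Sum>i<2 * m. (-1) ^ i * hprod (hfactors c m (cis (pi / m) ^ i)) (xs @ ys))
      = K * (if 2 * m dvd m + na - nb then of_nat (2 * m) else 0)"
    using assms(1) sum_cis_2pi_div_pow[of "2 * m" "m + na - nb"]
    by (simp add: summand flip: sum_distrib_left)
  also have "2 * m dvd m + na - nb \<longleftrightarrow> m + na - nb = 0 \<or> m + na - nb = 2 * m"
    using dvd_imp_le[of "2 * m" "m + na - nb"] \<open>na \<le> m\<close> by (cases "m + na - nb = 0") auto
  also have "\<dots> \<longleftrightarrow> (na = 0 \<and> nb = m) \<or> (na = m \<and> nb = 0)"
    using \<open>na \<le> m\<close> \<open>nb \<le> m\<close> by auto
  also have "na = 0 \<and> nb = m \<longleftrightarrow> xs = replicate m 1 \<and> ys = replicate m 2"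
    using assms count_list_2_eq_0_iff[of xs] count_list_2_eq_length_iff[of ys]
    by (simp add: na_def nb_def)
  also have "na = m \<and> nb = 0 \<longleftrightarrow> xs = replicate m 2 \<and> ys = replicate m 1"
    using assms count_list_2_eq_length_iff[of xs] count_list_2_eq_0_iff[of ys]
    by (simp add: na_def nb_def)
  finally show ?thesis
    using assms by (cases m) (auto simp: EIJ_append K_def)
qed

lemma EIJ_alternating_decomposition:
  assumes "1 \<le> m"
  shows "EIJ m c = (\<lambda>is. \<Sum>i<2 * m.
    of_real ((-1) ^ i / (2 * real m)) * hprod (hfactors c m (cis (pi / m) ^ i)) is)"
proof
  fix "is"
  show "EIJ m c is = (\<Sum>i<2 * m.
    of_real ((-1) ^ i / (2 * real m)) * hprod (hfactors c m (cis (pi / m) ^ i)) is)"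
  proof (cases "length is = 2 * m")
    case True
    then obtain xs ys where "is = xs @ ys" and "length xs = m" and "length ys = m"
      by (rule length_eq_double_splitE)
    then show ?thesis
      using alternating_sum_hprod_hfactors[OF assms, of xs ys c] assms
      by (simp add: sum_distrib_left flip: sum_divide_distrib)
  next
    case False
    then have "is \<noteq> replicate m 1 @ replicate m 2"
      and "is \<noteq> replicate m 2 @ replicate m 1"
      by auto
    with False show ?thesis
      using assms by (simp add: EIJ_def hprod_def length_hfactors)
  qed
qed

lemma sum_lessThan_double_pairs:
  fixes m :: nat
  assumes "1 \<le> m"
  shows "(\<Sum>i<2 * m. f i) = f 0 + f m + (\<Sum>k = 1..m - 1. f k + f (2 * m - k))"
proof -
  have "(\<Sum>i<2 * m. f i) = (\<Sum>i = 0..<m. f i) + (\<Sum>i = m..<2 * m. f i)"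
    by (simp add: lessThan_atLeast0 sum.atLeastLessThan_concat)
  also have "(\<Sum>i = 0..<m. f i) = f 0 + (\<Sum>k = 1..m - 1. f k)"
    using assms
    by (simp add: sum.atLeast_Suc_lessThan atLeastLessThanSuc_atLeastAtMost[symmetric])
  also have "(\<Sum>i = m..<2 * m. f i) = f m + (\<Sum>i = Suc m..<2 * m. f i)"
    using assms by (simp add: sum.atLeast_Suc_lessThan)
  also have "(\<Sum>i = Suc m..<2 * m. f i) = (\<Sum>k = 1..m - 1. f (2 * m - k))"
    by (rule sum.reindex_bij_witness[of _ "\<lambda>i. 2 * m - i" "\<lambda>k. 2 * m - k"]) auto
  finally show ?thesis
    by (simp add: sum.distrib algebra_simps)
qed

lemma EIJ_conjugate_pairs_decomposition:
  assumes "1 \<le> m"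
  shows "EIJ m c = (\<lambda>is. (1 / (2 * of_nat m)) *
      (hprod (hfactors c m 1) is
       + (-1) ^ m * hprod (hfactors c m (cis (pi / m) ^ m)) is
       + (\<Sum>k = 1..m - 1. (-1) ^ k *
           (hprod (hfactors c m (cis (pi / m) ^ k)) is
            + hprod (hfactors c m (cnj (cis (pi / m) ^ k))) is))))"
proof
  fix "is"
  define \<omega> where "\<omega> = cis (pi / m)"
  define f where "f i = (-1) ^ i * hprod (hfactors c m (\<omega> ^ i)) is" for i
  have "\<omega> ^ (2 * m) = 1"
    using assms by (simp add: \<omega>_def Complex.DeMoivre)
  have mirror: "f (2 * m - k) = (-1) ^ k * hprod (hfactors c m (cnj (\<omega> ^ k))) is"
    if "k \<le> 2 * m" for k
  proof -
    have "\<omega> ^ (2 * m - k) = cnj (\<omega> ^ k)"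
      using norm_eq_1_pow_cnj_pow[of \<omega> k "2 * m"] \<open>\<omega> ^ (2 * m) = 1\<close> that
      by (simp add: \<omega>_def norm_power)
    moreover have "(-1::complex) ^ (2 * m - k) = (-1) ^ k"
      using that by (simp add: minus_one_power_iff even_diff_nat)
    ultimately show ?thesis
      by (simp add: f_def)
  qed
  have pairs: "(\<Sum>k = 1..m - 1. f k + f (2 * m - k)) = (\<Sum>k = 1..m - 1.
      (-1) ^ k * (hprod (hfactors c m (\<omega> ^ k)) is + hprod (hfactors c m (cnj (\<omega> ^ k))) is))"
  proof (rule sum.cong)
    fix k
    assume "k \<in> {1..m - 1}"
    then have "k \<le> 2 * m"
      by auto
    then show "f k + f (2 * m - k) = (-1) ^ k *
        (hprod (hfactors c m (\<omega> ^ k)) is + hprod (hfactors c m (cnj (\<omega> ^ k))) is)"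
      using mirror[of k] by (simp add: f_def[of k] algebra_simps)
  qed simp
  have "EIJ m c is = (1 / (2 * of_nat m)) * (\<Sum>i<2 * m. f i)"
    by (subst EIJ_alternating_decomposition[OF assms])
      (simp add: f_def \<omega>_def sum_distrib_left)
  also have "(\<Sum>i<2 * m. f i) = f 0 + f m + (\<Sum>k = 1..m - 1. f k + f (2 * m - k))"
    using assms by (rule sum_lessThan_double_pairs)
  finally show "EIJ m c is = (1 / (2 * of_nat m)) *
      (hprod (hfactors c m 1) is
       + (-1) ^ m * hprod (hfactors c m (cis (pi / m) ^ m)) is
       + (\<Sum>k = 1..m - 1. (-1) ^ k *
           (hprod (hfactors c m (cis (pi / m) ^ k)) is
            + hprod (hfactors c m (cnj (cis (pi / m) ^ k))) is)))"
    unfolding pairs by (simp add: f_def \<omega>_def)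
qed

text \<open>\<open>herm_form a b d v = v\<^sup>* M v\<close> for the Hermitian matrix \<open>M = [[a, b], [cnj b, d]]\<close>.\<close>

definition herm_form :: "real \<Rightarrow> complex \<Rightarrow> real \<Rightarrow> complex^2 \<Rightarrow> real" where
  "herm_form a b d v =
    a * (cmod (v$1))\<^sup>2 + d * (cmod (v$2))\<^sup>2 + 2 * Re (b * v$1 * cnj (v$2))"

lemma of_real_herm_form:
  "of_real (herm_form a b d v) = of_real a * (v$1 * cnj (v$1)) + b * (v$1 * cnj (v$2))
    + cnj b * (v$2 * cnj (v$1)) + of_real d * (v$2 * cnj (v$2))"
proof -
  have "of_real (herm_form a b d v) = of_real a * of_real ((cmod (v$1))\<^sup>2)
      + of_real d * of_real ((cmod (v$2))\<^sup>2) + of_real (2 * Re (b * v$1 * cnj (v$2)))"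
    by (simp only: herm_form_def of_real_add of_real_mult)
  also have "\<dots> = of_real a * (v$1 * cnj (v$1)) + b * (v$1 * cnj (v$2))
      + cnj b * (v$2 * cnj (v$1)) + of_real d * (v$2 * cnj (v$2))"
    unfolding complex_norm_square complex_add_cnj[symmetric] by (simp add: algebra_simps)
  finally show ?thesis .
qed

text \<open>
  With \<open>d = 0\<close> the two conditions are real linear equations in \<open>a\<close>; choosing \<open>b\<close> with
  \<open>Re (b * (C P - A Q)) = 0\<close> makes them compatible.
\<close>

lemma ex_herm_form_vanishing_at_two:
  "\<exists>a b d. b \<noteq> 0 \<and> herm_form a b d p = 0 \<and> herm_form a b d q = 0"
proof -
  define A where "A = (cmod (p$1))\<^sup>2"
  define C where "C = (cmod (q$1))\<^sup>2"
  define P where "P = p$1 * cnj (p$2)"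
  define Q where "Q = q$1 * cnj (q$2)"
  define X where "X = of_real C * P - of_real A * Q"
  define b where "b = (if X = 0 then 1 else \<i> * cnj X)"
  have "b \<noteq> 0"
    by (simp add: b_def)
  have "Re (b * X) = 0"
    by (simp add: b_def)
  then have key: "C * Re (b * P) = A * Re (b * Q)"
    by (simp add: X_def algebra_simps)
  have hf: "herm_form a b 0 p = a * A + 2 * Re (b * P)"
    "herm_form a b 0 q = a * C + 2 * Re (b * Q)" for a
    by (simp_all add: herm_form_def A_def C_def P_def Q_def mult.assoc)
  show ?thesis
  proof (cases "A + C = 0")
    case True
    then have "P = 0" and "Q = 0"
      by (simp_all add: A_def C_def P_def Q_def add_nonneg_eq_0_iff)
    with True show ?thesis
      using \<open>b \<noteq> 0\<close> hf by (intro exI[of _ 0] exI[of _ b] exI[of _ 0]) simp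
  next
    case False
    define a where "a = - 2 * (Re (b * P) + Re (b * Q)) / (A + C)"
    have "a * A + 2 * Re (b * P) = 0" and "a * C + 2 * Re (b * Q) = 0"
      using False key by (simp_all add: a_def field_simps)
    then show ?thesis
      using \<open>b \<noteq> 0\<close> hf by (intro exI[of _ a] exI[of _ b] exI[of _ 0]) simp
  qed
qed

definition contract_first :: "real \<Rightarrow> complex \<Rightarrow> real \<Rightarrow> nat \<Rightarrow> tensor \<Rightarrow> tensor" where
  "contract_first a b d m H = (\<lambda>is. if length is = 2 * m then
     (let xs = take m is; ys = drop m is in
        of_real a * H ((1 # xs) @ (1 # ys)) + b * H ((1 # xs) @ (2 # ys))
      + cnj b * H ((2 # xs) @ (1 # ys)) + of_real d * H ((2 # xs) @ (2 # ys)))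
     else 0)"

lemma contract_first_append:
  assumes "length xs = m" and "length ys = m"
  shows "contract_first a b d m H (xs @ ys) =
      of_real a * H ((1 # xs) @ (1 # ys)) + b * H ((1 # xs) @ (2 # ys))
    + cnj b * H ((2 # xs) @ (1 # ys)) + of_real d * H ((2 # xs) @ (2 # ys))"
  using assms by (simp add: contract_first_def)

lemma contract_first_sum:
  "contract_first a b d m (\<lambda>is. \<Sum>i\<in>A. f i * H i is)
    = (\<lambda>is. \<Sum>i\<in>A. f i * contract_first a b d m (H i) is)"
  by (auto simp: contract_first_def Let_def sum_distrib_left sum.distrib algebra_simps intro!: ext)

lemma contract_first_hprod:
  assumes "length vs = m"
  shows "contract_first a b d m (hprod (v # vs))
    = (\<lambda>is. of_real (herm_form a b d v) * hprod vs is)"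
proof
  fix "is"
  show "contract_first a b d m (hprod (v # vs)) is
    = of_real (herm_form a b d v) * hprod vs is"
  proof (cases "length is = 2 * m")
    case True
    then obtain xs ys where "is = xs @ ys" and "length xs = m" and "length ys = m"
      by (rule length_eq_double_splitE)
    then show ?thesis
      using assms
      by (simp add: contract_first_append hprod_Cons of_real_herm_form algebra_simps)
  next
    case False
    then show ?thesis
      using assms by (simp add: contract_first_def hprod_def)
  qed
qed

lemma contract_first_EIJ:
  assumes "1 \<le> m"
  shows "contract_first a b d m (EIJ (Suc m) c) = EIJ m (b * c)"
proof
  fix "is"
  show "contract_first a b d m (EIJ (Suc m) c) is = EIJ m (b * c) is"
  proof (cases "length is = 2 * m")
    case True
    then obtain xs ys where "is = xs @ ys" and "length xs = m" and "length ys = m"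
      by (rule length_eq_double_splitE)
    moreover have "EIJ (Suc m) c (x # xs @ y # ys) =
      (if x = 1 \<and> y = 2 \<and> xs = replicate m 1 \<and> ys = replicate m 2 then c
       else if x = 2 \<and> y = 1 \<and> xs = replicate m 2 \<and> ys = replicate m 1 then cnj c
       else 0)" for x y
      using EIJ_append[of "x # xs" "Suc m" "y # ys" c] \<open>length xs = m\<close> \<open>length ys = m\<close>
      by auto
    moreover have "replicate m (1::2) \<noteq> replicate m 2"
      using assms by (cases m) auto
    ultimately show ?thesis
      by (simp add: contract_first_append EIJ_append)
  next
    case False
    then show ?thesis
      by (auto simp: contract_first_def EIJ_def)
  qed
qed

definition has_hdecomp :: "nat \<Rightarrow> tensor \<Rightarrow> nat \<Rightarrow> bool" where
  "has_hdecomp m H r \<longleftrightarrow> (\<exists>(lam::nat \<Rightarrow> real) us. (\<forall>i<r. length (us i) = m) \<and>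
     H = (\<lambda>is. \<Sum>i<r. of_real (lam i) * hprod (us i) is))"

lemma hrank_eq_Least: "hrank m H = (LEAST r. has_hdecomp m H r)"
  by (simp add: hrank_def has_hdecomp_def)

lemma contract_first_hdecomp:
  assumes "\<forall>i<r. length (us i) = Suc m"
  shows "contract_first a b d m (\<lambda>is. \<Sum>i<r. of_real (lam i) * hprod (us i) is)
    = (\<lambda>is. \<Sum>i<r. of_real (lam i * herm_form a b d (hd (us i))) * hprod (tl (us i)) is)"
proof -
  have "contract_first a b d m (hprod (us i))
      = (\<lambda>is. of_real (herm_form a b d (hd (us i))) * hprod (tl (us i)) is)" if "i < r" for i
    using contract_first_hprod[of "tl (us i)" m a b d "hd (us i)"] assms that
    by (cases "us i") auto
  then show ?thesis
    by (auto simp: contract_first_sum intro!: ext sum.cong)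
qed

lemma has_hdecomp_contract_first:
  assumes "has_hdecomp (Suc m) H r" and "2 \<le> r"
  shows "\<exists>a b d. b \<noteq> 0 \<and> has_hdecomp m (contract_first a b d m H) (r - 2)"
proof -
  obtain lam us where len: "\<forall>i<r. length (us i) = Suc m"
    and H: "H = (\<lambda>is. \<Sum>i<r. of_real (lam i) * hprod (us i) is)"
    using assms(1) unfolding has_hdecomp_def by blast
  obtain n where r: "r = Suc (Suc n)"
    using assms(2) by (metis add_2_eq_Suc le_Suc_ex)
  obtain a b d where "b \<noteq> 0"
    and zeros: "herm_form a b d (hd (us n)) = 0" "herm_form a b d (hd (us (Suc n))) = 0"
    using ex_herm_form_vanishing_at_two by blast
  define lam' where "lam' i = lam i * herm_form a b d (hd (us i))" for i
  have "contract_first a b d m H = (\<lambda>is. \<Sum>i<r. of_real (lam' i) * hprod (tl (us i)) is)"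
    unfolding H lam'_def using len by (rule contract_first_hdecomp)
  also have "\<dots> = (\<lambda>is. \<Sum>i<n. of_real (lam' i) * hprod (tl (us i)) is)"
    using zeros by (simp add: r lam'_def)
  finally have "contract_first a b d m H = (\<lambda>is. \<Sum>i<n. of_real (lam' i) * hprod (tl (us i)) is)" .
  moreover have "\<forall>i<n. length (tl (us i)) = m"
    using len by (simp add: r)
  ultimately have "has_hdecomp m (contract_first a b d m H) (r - 2)"
    unfolding has_hdecomp_def r by (intro exI[of _ lam'] exI[of _ "\<lambda>i. tl (us i)"]) simp
  with \<open>b \<noteq> 0\<close> show ?thesis
    by blast
qed

text \<open>
  A single term \<open>\<lambda> T \<otimes> cnj T\<close> with zero \<open>(I, I)\<close>-entry \<open>\<lambda> |T\<^sub>I|\<^sup>2\<close> has zero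
  \<open>(I, J)\<close>-entry.
\<close>

lemma has_hdecomp_EIJ_two_le:
  assumes "1 \<le> m" and "c \<noteq> 0" and "has_hdecomp m (EIJ m c) r"
  shows "2 \<le> r"
proof (rule ccontr)
  assume "\<not> 2 \<le> r"
  then consider "r = 0" | "r = 1"
    by linarith
  then show False
  proof cases
    case 1
    with assms(3) have "EIJ m c = (\<lambda>_. 0)"
      by (simp add: has_hdecomp_def)
    moreover have "EIJ m c (replicate m 1 @ replicate m 2) = c"
      by (simp add: EIJ_def)
    ultimately show False
      using assms(2) by simp
  next
    case 2
    then obtain lam U where "length U = m"
      and dec: "EIJ m c = (\<lambda>is. of_real lam * hprod U is)"
      using assms(3) by (auto simp: has_hdecomp_def)
    define I J where "I = replicate m (1::2)" and "J = replicate m (2::2)"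
    have "I \<noteq> J"
      using assms(1) by (cases m) (auto simp: I_def J_def)
    have "of_real lam * (tprod U I * cnj (tprod U I)) = 0"
      using fun_cong[OF dec, of "I @ I"] \<open>length U = m\<close> \<open>I \<noteq> J\<close>
      by (simp add: EIJ_append hprod_append I_def J_def)
    moreover have "of_real lam * (tprod U I * cnj (tprod U J)) = c"
      using fun_cong[OF dec, of "I @ J"] \<open>length U = m\<close>
      by (simp add: EIJ_append hprod_append I_def J_def)
    ultimately show False
      using assms(2) by auto
  qed
qed

lemma has_hdecomp_EIJ_double_le:
  assumes "1 \<le> m" and "c \<noteq> 0" and "has_hdecomp m (EIJ m c) r"
  shows "2 * m \<le> r"
  using assms
proof (induction m arbitrary: c r rule: nat_induct_at_least)
  case base
  then show ?case
    using has_hdecomp_EIJ_two_le[of 1 c r] by simp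
next
  case (Suc m)
  have "2 \<le> r"
    using has_hdecomp_EIJ_two_le[of "Suc m" c r] Suc.prems by simp
  then obtain a b d where "b \<noteq> 0"
    and "has_hdecomp m (contract_first a b d m (EIJ (Suc m) c)) (r - 2)"
    using has_hdecomp_contract_first Suc.prems(2) by blast
  then have "has_hdecomp m (EIJ m (b * c)) (r - 2)"
    using contract_first_EIJ Suc.hyps by simp
  then have "2 * m \<le> r - 2"
    using Suc.IH[of "b * c" "r - 2"] \<open>b \<noteq> 0\<close> Suc.prems(1) by simp
  then show ?case
    using \<open>2 \<le> r\<close> by simp
qed

lemma hrank_EIJ:
  assumes "1 \<le> m" and "c \<noteq> 0"
  shows "hrank m (EIJ m c) = 2 * m"
  unfolding hrank_eq_Least
proof (rule Least_equality)
  show "has_hdecomp m (EIJ m c) (2 * m)"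
    unfolding has_hdecomp_def
    using EIJ_alternating_decomposition[OF assms(1)] length_hfactors[OF assms(1)]
    by (intro exI[of _ "\<lambda>i. (-1) ^ i / (2 * real m)"]
        exI[of _ "\<lambda>i. hfactors c m (cis (pi / m) ^ i)"]) simp
  show "2 * m \<le> r" if "has_hdecomp m (EIJ m c) r" for r
    using has_hdecomp_EIJ_double_le assms that by blast
qed

theorem proposition2p2:
  fixes m :: nat and c :: complex
  assumes "m \<ge> 1" and "c \<noteq> 0"
  defines "u \<equiv> (\<lambda>k::nat. vec2 1 (cis (real k * pi / real m)))"
      and "ut \<equiv> (\<lambda>k::nat. vec2 c (cis (real k * pi / real m)))"
      and "vt \<equiv> (\<lambda>k::nat. vec2 c (cis (- (real k * pi / real m))))"
  shows "hrank m (EIJ m c) = 2 * m \<and>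
    EIJ m c = (\<lambda>is. (1 / (2 * of_nat m)) *
      (hprod (ut 0 # replicate (m - 1) (u 0)) is
       + (-1) ^ m * hprod (ut m # replicate (m - 1) (u m)) is
       + (\<Sum>k = 1..m - 1. (-1) ^ k *
           (hprod (ut k # replicate (m - 1) (u k)) is
            + hprod (vt k # replicate (m - 1) (cvec (u k))) is))))"
proof -
  have root: "cis (real k * pi / real m) = cis (pi / m) ^ k" for k
    by (simp add: Complex.DeMoivre)
  have "cis (- (real k * pi / real m)) = cnj (cis (pi / m) ^ k)" for k
    by (simp add: Complex.DeMoivre cis_cnj)
  with root have "ut k # replicate (m - 1) (u k) = hfactors c m (cis (pi / m) ^ k)"
    and "vt k # replicate (m - 1) (cvec (u k)) = hfactors c m (cnj (cis (pi / m) ^ k))" for k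
    by (simp_all only: u_def ut_def vt_def hfactors_def cvec_vec2 complex_cnj_one)
  then show ?thesis
    using hrank_EIJ[OF assms(1,2)] EIJ_conjugate_pairs_decomposition[OF assms(1), of c] by simp
qed

end
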